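(* Let $n\geq 2$ and let $N$ be a binary level-1 network on $n$ leaves. Then $g(N)\leq n-c_N-2$. Moreover, equality $g(N)=n-c_N-2$ holds if $N$ is a phylogenetic tree (i.e. has no hybrid vertex) or if every gall of $N$ has exactly three outgoing arcs.
   Context: A leaf of a DAG is a vertex of in-degree 1 and out-degree 0. For a finite set $X$, a phylogenetic network on $X$ is a DAG (no loops, no multiple arcs) with a unique vertex (the root) of in-degree 0, which has out-degree at least 2, whose set of leaves is $X$, and in which every other non-leaf vertex is either a split vertex (in-degree 1, out-degree $\geq 2$) or a hybrid vertex (in-degree $\geq 2$, out-degree $\geq 1$). It is binary if the root and all split vertices have out-degree 2 and every hybrid vertex has in-degree 2 and out-degree 1. $U(N)$ denotes the underlying undirected graph. A binary level-1 network is a binary phylogenetic network in which every biconnected component of $U(N)$ contains at most one hybrid vertex; by standing convention every cycle of $U(N)$ has at least four vertices. A gall is a biconnected component of $U(N)$ with more than one edge (with the arc directions of $N$); $g(N)$ is the number of galls of $N$. An outgoing arc of a gall $C$ is an arc whose tail is a vertex of $C$ but whose head is not. An arc of $N$ is a cut arc if deleting it disconnects $U(N)$; it is trivial if its head is a leaf and non-trivial otherwise. $c_N$ denotes the number of non-trivial cut arcs of $N$. *)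

theory Defs
  imports Main
begin

text \<open>A directed graph is given by a finite vertex set V and an arc set A of ordered pairs
  (no multiple arcs by construction).\<close>

definition indeg :: "('v \<times> 'v) set \<Rightarrow> 'v \<Rightarrow> nat" where
  "indeg A v = card {u. (u, v) \<in> A}"

definition outdeg :: "('v \<times> 'v) set \<Rightarrow> 'v \<Rightarrow> nat" where
  "outdeg A v = card {w. (v, w) \<in> A}"

definition leaves :: "'v set \<Rightarrow> ('v \<times> 'v) set \<Rightarrow> 'v set" where
  "leaves V A = {v \<in> V. indeg A v = 1 \<and> outdeg A v = 0}"

definition is_split :: "('v \<times> 'v) set \<Rightarrow> 'v \<Rightarrow> bool" where
  "is_split A v \<longleftrightarrow> indeg A v = 1 \<and> outdeg A v \<ge> 2"

definition is_hybrid :: "('v \<times> 'v) set \<Rightarrow> 'v \<Rightarrow> bool" where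
  "is_hybrid A v \<longleftrightarrow> indeg A v \<ge> 2 \<and> outdeg A v \<ge> 1"

definition phylo_network :: "'v set \<Rightarrow> ('v \<times> 'v) set \<Rightarrow> 'v set \<Rightarrow> 'v \<Rightarrow> bool" where
  "phylo_network V A X r \<longleftrightarrow>
     finite V \<and> A \<subseteq> V \<times> V \<and> acyclic A \<and>
     r \<in> V \<and> indeg A r = 0 \<and> outdeg A r \<ge> 2 \<and>
     (\<forall>v\<in>V. indeg A v = 0 \<longrightarrow> v = r) \<and>
     X = leaves V A \<and>
     (\<forall>v \<in> V - {r} - X. is_split A v \<or> is_hybrid A v)"

definition binary_network :: "'v set \<Rightarrow> ('v \<times> 'v) set \<Rightarrow> 'v set \<Rightarrow> 'v \<Rightarrow> bool" where
  "binary_network V A X r \<longleftrightarrow> phylo_network V A X r \<and> outdeg A r = 2 \<and>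
     (\<forall>v\<in>V. is_split A v \<longrightarrow> outdeg A v = 2) \<and>
     (\<forall>v\<in>V. is_hybrid A v \<longrightarrow> indeg A v = 2 \<and> outdeg A v = 1)"

definition uadj :: "('v \<times> 'v) set \<Rightarrow> 'v \<Rightarrow> 'v \<Rightarrow> bool" where
  "uadj A u v \<longleftrightarrow> (u, v) \<in> A \<or> (v, u) \<in> A"

definition ucycle :: "('v \<times> 'v) set \<Rightarrow> 'v list \<Rightarrow> bool" where
  "ucycle A cs \<longleftrightarrow> length cs \<ge> 3 \<and> distinct cs \<and>
     (\<forall>i < length cs. uadj A (cs ! i) (cs ! ((i + 1) mod length cs)))"

definition cycle_arcs :: "('v \<times> 'v) set \<Rightarrow> 'v list \<Rightarrow> ('v \<times> 'v) set" where
  "cycle_arcs A cs = {a \<in> A. \<exists>i < length cs.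
      a = (cs ! i, cs ! ((i + 1) mod length cs)) \<or> a = (cs ! ((i + 1) mod length cs), cs ! i)}"

text \<open>Two edges lie in the same biconnected component iff they are equal or lie on a common
  cycle; biconnected components are the resulting classes of edges (with arc directions).\<close>
definition same_block :: "('v \<times> 'v) set \<Rightarrow> ('v \<times> 'v) \<Rightarrow> ('v \<times> 'v) \<Rightarrow> bool" where
  "same_block A e f \<longleftrightarrow> e = f \<or> (\<exists>cs. ucycle A cs \<and> e \<in> cycle_arcs A cs \<and> f \<in> cycle_arcs A cs)"

definition blocks :: "('v \<times> 'v) set \<Rightarrow> ('v \<times> 'v) set set" where
  "blocks A = {{f \<in> A. same_block A e f} | e. e \<in> A}"

definition block_verts :: "('v \<times> 'v) set \<Rightarrow> 'v set" where
  "block_verts C = fst ` C \<union> snd ` C"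

definition galls :: "('v \<times> 'v) set \<Rightarrow> ('v \<times> 'v) set set" where
  "galls A = {C \<in> blocks A. card C > 1}"

definition num_galls :: "('v \<times> 'v) set \<Rightarrow> nat" where
  "num_galls A = card (galls A)"

definition outgoing_arcs :: "('v \<times> 'v) set \<Rightarrow> ('v \<times> 'v) set \<Rightarrow> ('v \<times> 'v) set" where
  "outgoing_arcs A C = {(u, w) \<in> A. u \<in> block_verts C \<and> w \<notin> block_verts C}"

text \<open>Standing convention: every cycle of U(N) has at least four vertices.\<close>
definition binary_level1 :: "'v set \<Rightarrow> ('v \<times> 'v) set \<Rightarrow> 'v set \<Rightarrow> 'v \<Rightarrow> bool" where
  "binary_level1 V A X r \<longleftrightarrow> binary_network V A X r \<and>
     (\<forall>C \<in> blocks A. card {v \<in> block_verts C. is_hybrid A v} \<le> 1) \<and>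
     (\<forall>cs. ucycle A cs \<longrightarrow> length cs \<ge> 4)"

definition uconnected :: "'v set \<Rightarrow> ('v \<times> 'v) set \<Rightarrow> bool" where
  "uconnected V B \<longleftrightarrow> (\<forall>u\<in>V. \<forall>v\<in>V. (u, v) \<in> (B \<union> B\<inverse>)\<^sup>*)"

definition is_cut_arc :: "'v set \<Rightarrow> ('v \<times> 'v) set \<Rightarrow> ('v \<times> 'v) \<Rightarrow> bool" where
  "is_cut_arc V A a \<longleftrightarrow> a \<in> A \<and> \<not> uconnected V (A - {a})"

definition num_nontriv_cut_arcs :: "'v set \<Rightarrow> ('v \<times> 'v) set \<Rightarrow> nat" where
  "num_nontriv_cut_arcs V A = card {(u, w). is_cut_arc V A (u, w) \<and> w \<notin> leaves V A}"

end

theory Submission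
  imports Defs
begin

text \<open>Every cycle of \<open>U(N)\<close> contains exactly one hybrid vertex \<open>h\<close>; read from \<open>h\<close>, it
  consists of two directed paths from a source \<open>s\<close> into the two parents of \<open>h\<close>, and it has no
  chords. Consequently two cycles through the same hybrid coincide, the galls are exactly the arc
  sets of the cycles and correspond bijectively to the hybrid vertices, and the cut arcs are
  exactly the arcs on no cycle. Counting degrees gives \<open>|A| = 2n + 3g(N) - 2\<close>, and a gall with
  \<open>k\<close> arcs has \<open>k - 1\<close> outgoing arcs. Together, \<open>n - c\<^sub>N - 2 - g(N)\<close> is the sum over the galls
  of (outgoing arcs \<open>- 3\<close>), and every summand is nonnegative because every cycle has at least
  four vertices.\<close>

section \<open>Consecutive pairs and walks\<close>

definition adj_pairs :: "'a list \<Rightarrow> ('a \<times> 'a) set" where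
  "adj_pairs xs = set (zip xs (tl xs))"

lemma adj_pairs_Nil [simp]: "adj_pairs [] = {}"
  and adj_pairs_singleton [simp]: "adj_pairs [x] = {}"
  and adj_pairs_Cons_Cons [simp]: "adj_pairs (x # y # zs) = insert (x, y) (adj_pairs (y # zs))"
  by (auto simp: adj_pairs_def)

lemma adj_pairs_Cons: "xs \<noteq> [] \<Longrightarrow> adj_pairs (x # xs) = insert (x, hd xs) (adj_pairs xs)"
  by (cases xs) auto

lemma adj_pairs_append:
  "xs \<noteq> [] \<Longrightarrow> ys \<noteq> [] \<Longrightarrow> adj_pairs (xs @ ys) = adj_pairs xs \<union> adj_pairs ys \<union> {(last xs, hd ys)}"
  by (induction xs rule: induct_list012) (auto simp: adj_pairs_Cons)

lemma successively_iff_adj_pairs: "successively P xs \<longleftrightarrow> (\<forall>(a, b) \<in> adj_pairs xs. P a b)"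
  by (induction xs rule: induct_list012) auto

lemma adj_pairs_in_set: "(a, b) \<in> adj_pairs xs \<Longrightarrow> a \<in> set xs \<and> b \<in> set xs"
  unfolding adj_pairs_def by (cases xs) (auto dest: set_zip_leftD set_zip_rightD)

lemma adj_pairs_append_left: "adj_pairs xs \<subseteq> adj_pairs (xs @ ys)"
  and adj_pairs_append_right: "adj_pairs ys \<subseteq> adj_pairs (xs @ ys)"
  by (cases "xs = []"; cases "ys = []"; auto simp: adj_pairs_append)+

definition cyclic_adj_pairs :: "'a list \<Rightarrow> ('a \<times> 'a) set" where
  "cyclic_adj_pairs xs = adj_pairs (xs @ [hd xs])"

lemma cyclic_adj_pairs_conv_nth:
  assumes "xs \<noteq> []"
  shows "cyclic_adj_pairs xs = {(xs ! i, xs ! ((i + 1) mod length xs)) | i. i < length xs}"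
proof -
  have fst: "(xs @ [hd xs]) ! i = xs ! i" if "i < length xs" for i
    using that by (simp add: nth_append)
  have snd: "tl (xs @ [hd xs]) ! i = xs ! ((i + 1) mod length xs)" if "i < length xs" for i
  proof -
    have "tl (xs @ [hd xs]) ! i = (xs @ [hd xs]) ! Suc i"
      using assms by (cases xs) auto
    also have "\<dots> = xs ! ((i + 1) mod length xs)"
    proof (cases "Suc i < length xs")
      case False
      then have "Suc i = length xs" using that by simp
      then show ?thesis using assms by (simp add: nth_append hd_conv_nth)
    qed (simp add: nth_append)
    finally show ?thesis .
  qed
  have "length (tl (xs @ [hd xs])) = length xs"
    by simp
  with fst snd show ?thesis
    unfolding cyclic_adj_pairs_def adj_pairs_def set_zip
    by (auto simp: min_def) (metis fst snd)+
qed

lemma cyclic_adj_pairs_Cons: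
  "ys \<noteq> [] \<Longrightarrow> cyclic_adj_pairs (h # ys) = {(h, hd ys)} \<union> adj_pairs ys \<union> {(last ys, h)}"
  unfolding cyclic_adj_pairs_def
  using adj_pairs_append[of "[h]" "ys @ [h]"] adj_pairs_append[of ys "[h]"] by auto

lemma cyclic_adj_pairs_rotate1: "cyclic_adj_pairs (rotate1 xs) = cyclic_adj_pairs xs"
proof (cases xs)
  case (Cons x zs)
  then show ?thesis
    using cyclic_adj_pairs_Cons[of zs x] adj_pairs_append[of zs "[x]"] adj_pairs_append[of "zs @ [x]" "[hd zs]"]
    by (cases "zs = []") (auto simp: cyclic_adj_pairs_def)
qed simp

lemma cyclic_adj_pairs_rotate: "cyclic_adj_pairs (rotate n xs) = cyclic_adj_pairs xs"
  by (induction n) (simp_all add: cyclic_adj_pairs_rotate1)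

lemma rotate_to_head:
  assumes "h \<in> set cs"
  shows "\<exists>n ys. rotate n cs = h # ys"
proof -
  obtain as bs where "cs = as @ h # bs"
    using split_list[OF assms] by blast
  then have "rotate (length as) cs = h # bs @ as"
    by (simp add: rotate_append)
  then show ?thesis by blast
qed

lemma rtrancl_imp_walk:
  assumes "(x, y) \<in> R\<^sup>*"
  shows "\<exists>ps. ps \<noteq> [] \<and> hd ps = x \<and> last ps = y \<and> successively (\<lambda>a b. (a, b) \<in> R) ps"
  using assms
proof (induction rule: rtrancl_induct)
  case base
  show ?case by (intro exI[of _ "[x]"]) auto
next
  case (step y z)
  then obtain ps where "ps \<noteq> []" "hd ps = x" "last ps = y" "successively (\<lambda>a b. (a, b) \<in> R) ps"
    by blast
  with step show ?case
    by (intro exI[of _ "ps @ [z]"]) (auto simp: successively_append_iff)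
qed

lemma rtrancl_imp_distinct_walk:
  assumes "(x, y) \<in> R\<^sup>*"
  shows "\<exists>ps. ps \<noteq> [] \<and> hd ps = x \<and> last ps = y \<and> distinct ps \<and> successively (\<lambda>a b. (a, b) \<in> R) ps"
proof -
  define walk where
    "walk ps \<longleftrightarrow> ps \<noteq> [] \<and> hd ps = x \<and> last ps = y \<and> successively (\<lambda>a b. (a, b) \<in> R) ps" for ps
  have "\<exists>qs. walk qs \<and> distinct qs" if "walk ps" for ps
    using that
  proof (induction ps rule: length_induct)
    case (1 ps)
    show ?case
    proof (cases "distinct ps")
      case False
      then obtain as bs cs v where ps: "ps = as @ [v] @ bs @ [v] @ cs"
        using not_distinct_decomp by blast
      \<comment> \<open>cut out the loop between the two occurrences of \<open>v\<close>\<close>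
      have "successively (\<lambda>a b. (a, b) \<in> R) (as @ [v])" "successively (\<lambda>a b. (a, b) \<in> R) (v # cs)"
        using "1.prems" unfolding walk_def ps
        using successively_append_iff[of _ "as @ [v]" "bs @ [v] @ cs"]
          successively_append_iff[of _ "as @ [v] @ bs" "v # cs"] by auto
      then have "walk (as @ [v] @ cs)"
        using "1.prems" unfolding walk_def ps
        by (cases "as = []"; cases "cs = []") (auto simp: successively_append_iff successively_Cons)
      then show ?thesis
        using "1.IH" ps by force
    qed (use "1.prems" in blast)
  qed
  with rtrancl_imp_walk[OF assms] show ?thesis
    unfolding walk_def by blast
qed

lemma walk_rtrancl:
  assumes "successively (\<lambda>a b. (a, b) \<in> R) ps" "v \<in> set ps"
  shows "(hd ps, v) \<in> R\<^sup>* \<and> (v, last ps) \<in> R\<^sup>*"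
  using assms
proof (induction ps arbitrary: v rule: induct_list012)
  case (3 x y zs)
  have "(y, w) \<in> R\<^sup>* \<and> (w, last (y # zs)) \<in> R\<^sup>*" if "w \<in> set (y # zs)" for w
    using "3.IH"(2)[of w] "3.prems"(1) that by simp
  then show ?case
    using "3.prems" by (auto intro: converse_rtrancl_into_rtrancl)
qed auto

lemma successively_pred_in_adj_pairs:
  assumes "successively P xs" "v \<in> set xs" "v \<noteq> hd xs"
  shows "\<exists>w. (w, v) \<in> adj_pairs xs \<and> P w v"
proof -
  obtain as bs where xs: "xs = as @ v # bs" "as \<noteq> []"
    using split_list[OF assms(2)] assms(3) by fastforce
  then show ?thesis
    using assms(1) adj_pairs_append[of as "v # bs"]
    by (intro exI[of _ "last as"]) (simp add: successively_append_iff)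
qed

lemma successively_succ_in_adj_pairs:
  assumes "successively P xs" "v \<in> set xs" "v \<noteq> last xs"
  shows "\<exists>w. (v, w) \<in> adj_pairs xs \<and> P v w"
proof -
  obtain as bs where xs: "xs = as @ v # bs" "bs \<noteq> []"
    using split_list[OF assms(2)] assms(3) by fastforce
  then show ?thesis
    using assms(1) adj_pairs_append[of as "v # bs"] adj_pairs_Cons[of bs v]
    by (intro exI[of _ "hd bs"]) (cases "as = []"; auto simp: successively_append_iff successively_Cons)
qed

lemma card_arcs_into_eq_sum:
  assumes "finite W" "\<And>v. v \<in> W \<Longrightarrow> finite {u. (u, v) \<in> R}"
  shows "card {(u, v) \<in> R. v \<in> W} = (\<Sum>v\<in>W. card {u. (u, v) \<in> R})"
proof -
  have "{(u, v) \<in> R. v \<in> W} = prod.swap ` (SIGMA v:W. {u. (u, v) \<in> R})"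
    by force
  then have "card {(u, v) \<in> R. v \<in> W} = card (SIGMA v:W. {u. (u, v) \<in> R})"
    by (simp add: card_image)
  then show ?thesis
    using assms by simp
qed

lemma card_arcs_from_eq_sum:
  assumes "finite W" "\<And>v. v \<in> W \<Longrightarrow> finite {u. (v, u) \<in> R}"
  shows "card {(v, u) \<in> R. v \<in> W} = (\<Sum>v\<in>W. card {u. (v, u) \<in> R})"
proof -
  have "{(v, u) \<in> R. v \<in> W} = (SIGMA v:W. {u. (v, u) \<in> R})"
    by force
  then show ?thesis
    using assms by simp
qed

lemma sum_eq_except_one:
  assumes "finite W" "h \<in> W" "\<And>v. v \<in> W \<Longrightarrow> v \<noteq> h \<Longrightarrow> f v = c"
  shows "sum f W = f h + c * (card W - 1)"
proof -
  have "sum f (W - {h}) = sum (\<lambda>_. c) (W - {h})"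
    by (rule sum.cong) (use assms(3) in auto)
  then show ?thesis
    using sum.remove[OF assms(1,2), of f] assms(1,2) by simp
qed

section \<open>Relations in which every element has at most one predecessor\<close>

text \<open>A simple undirected walk in such a relation runs against the arcs up to some vertex \<open>s\<close>
  and along the arcs from there on; otherwise some vertex would be entered from both sides.\<close>

lemma unique_pred_zigzag_valley:
  assumes "successively (\<lambda>a b. (a, b) \<in> R \<or> (b, a) \<in> R) ys" "distinct ys" "ys \<noteq> []"
    and "\<forall>v\<in>set ys. \<forall>a b. (a, v) \<in> R \<longrightarrow> (b, v) \<in> R \<longrightarrow> a = b"
  shows "\<exists>L1 s L2. ys = L1 @ s # L2 \<and> successively (\<lambda>a b. (b, a) \<in> R) (L1 @ [s])
           \<and> successively (\<lambda>a b. (a, b) \<in> R) (s # L2)"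
  using assms
proof (induction ys)
  case (Cons y zs)
  show ?case
  proof (cases "zs = []")
    case True
    then show ?thesis by (intro exI[of _ "[]"] exI[of _ y]) simp
  next
    case False
    have "successively (\<lambda>a b. (a, b) \<in> R \<or> (b, a) \<in> R) zs"
      and yz: "(y, hd zs) \<in> R \<or> (hd zs, y) \<in> R"
      using Cons.prems(1) False by (auto simp: successively_Cons)
    then obtain L1 s L2 where zs: "zs = L1 @ s # L2"
      and down: "successively (\<lambda>a b. (b, a) \<in> R) (L1 @ [s])"
      and up: "successively (\<lambda>a b. (a, b) \<in> R) (s # L2)"
      using Cons.IH Cons.prems False by auto
    show ?thesis
    proof (cases "(hd zs, y) \<in> R")
      case True
      then have "successively (\<lambda>a b. (b, a) \<in> R) (y # L1 @ [s])"
        using down zs by (cases L1) (auto simp: successively_Cons)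
      then show ?thesis
        using zs up by (intro exI[of _ "y # L1"] exI[of _ s] exI[of _ L2]) simp
    next
      case False
      with yz have yz': "(y, hd zs) \<in> R" by blast
      have "L1 = []"
      proof (rule ccontr)
        assume "L1 \<noteq> []"
        then obtain z L' where L1: "L1 = z # L'" by (cases L1) auto
        \<comment> \<open>then \<open>z = hd zs\<close> would have the two distinct predecessors \<open>y\<close> and \<open>hd (L' @ [s])\<close>\<close>
        have "(hd (L' @ [s]), z) \<in> R" "hd zs = z" "z \<in> set (y # zs)"
          using down zs L1 by (auto simp: successively_Cons)
        then have "y = hd (L' @ [s])"
          using yz' Cons.prems(4) by blast
        moreover have "hd (L' @ [s]) \<in> set zs"
          using zs L1 by (cases L') auto
        ultimately show False
          using Cons.prems(2) by simp
      qed
      then show ?thesis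
        using zs up yz' by (intro exI[of _ "[]"] exI[of _ y] exI[of _ zs]) simp
    qed
  qed
qed simp

lemma unique_pred_rtrancl_to_walk:
  assumes "successively (\<lambda>a b. (a, b) \<in> R) ps" "ps \<noteq> []"
    and "\<And>a b c. (a, c) \<in> R \<Longrightarrow> (b, c) \<in> R \<Longrightarrow> a = b"
    and "(v, last ps) \<in> R\<^sup>*"
  shows "v \<in> set ps \<or> (v, hd ps) \<in> R\<^sup>*"
  using assms(1,2,4)
proof (induction ps rule: rev_induct)
  case (snoc x ps)
  show ?case
  proof (cases "ps = []")
    case False
    have walk: "successively (\<lambda>a b. (a, b) \<in> R) ps" and last_x: "(last ps, x) \<in> R"
      using snoc.prems(1) False by (auto simp: successively_append_iff)
    from snoc.prems(3) have "(v, x) \<in> R\<^sup>*" by simp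
    then show ?thesis
    proof (cases rule: rtranclE)
      case (step u)
      then have "u = last ps"
        using assms(3) last_x by blast
      then show ?thesis
        using snoc.IH[OF walk False] step False by auto
    qed simp
  qed (use snoc in simp)
qed simp

lemma unique_pred_rtrancl_comparable:
  assumes "\<And>a b c. (a, c) \<in> R \<Longrightarrow> (b, c) \<in> R \<Longrightarrow> a = b"
    and "(x, p) \<in> R\<^sup>*" "(y, p) \<in> R\<^sup>*"
  shows "(x, y) \<in> R\<^sup>* \<or> (y, x) \<in> R\<^sup>*"
  using assms(2,3)
proof (induction arbitrary: y rule: rtrancl_induct)
  case (step q p)
  from step.prems show ?case
  proof (cases rule: rtranclE)
    case base
    then show ?thesis
      using step by (meson rtrancl.rtrancl_into_rtrancl)
  next
    case (step q')
    then have "q' = q"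
      using assms(1) \<open>(q, p) \<in> R\<close> by blast
    then show ?thesis
      using step.IH step by blast
  qed
qed simp

section \<open>Cycles of the underlying undirected graph\<close>

lemma ucycle_iff_cyclic_adj_pairs:
  "ucycle A cs \<longleftrightarrow> 3 \<le> length cs \<and> distinct cs \<and> (\<forall>(x, y) \<in> cyclic_adj_pairs cs. uadj A x y)"
  unfolding ucycle_def by (cases "cs = []") (auto simp: cyclic_adj_pairs_conv_nth)

lemma cycle_arcs_conv_cyclic_adj_pairs:
  "cs \<noteq> [] \<Longrightarrow> cycle_arcs A cs = {a \<in> A. \<exists>(x, y) \<in> cyclic_adj_pairs cs. a = (x, y) \<or> a = (y, x)}"
  unfolding cycle_arcs_def cyclic_adj_pairs_conv_nth by auto

lemma ucycle_Cons_iff: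
  "ucycle A (h # ys) \<longleftrightarrow> 2 \<le> length ys \<and> distinct (h # ys) \<and> successively (uadj A) (h # ys @ [h])"
  unfolding ucycle_iff_cyclic_adj_pairs cyclic_adj_pairs_def successively_iff_adj_pairs by auto

lemma ucycle_ConsD:
  assumes "ucycle A (h # ys)"
  shows "ys \<noteq> []" "hd ys \<noteq> last ys" "h \<notin> set ys" "distinct ys"
    and "uadj A h (hd ys)" "uadj A (last ys) h" "successively (uadj A) ys"
proof -
  have len: "2 \<le> length ys" and dist: "distinct (h # ys)"
    and walk: "successively (uadj A) ((h # ys) @ [h])"
    using assms unfolding ucycle_Cons_iff by auto
  show ne: "ys \<noteq> []" "h \<notin> set ys" "distinct ys"
    using len dist by auto
  then obtain y z zs where ys: "ys = y # z # zs"
    using len by (metis One_nat_def Suc_1 Suc_le_length_iff)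
  then show "hd ys \<noteq> last ys"
    using dist by (metis distinct.simps(2) last.simps last_in_set list.discI list.sel(1))
  have "successively (uadj A) (h # ys)"
    using walk by (simp only: successively_append_iff)
  then show "uadj A h (hd ys)" "successively (uadj A) ys"
    using ne(1) by (simp_all add: successively_Cons)
  show "uadj A (last ys) h"
    using walk ne(1) by (simp only: successively_append_iff) simp
qed

lemma cycle_arcs_Cons:
  "cycle_arcs A (h # ys) = {a \<in> A. \<exists>(x, y) \<in> adj_pairs (h # ys @ [h]). a = (x, y) \<or> a = (y, x)}"
  using cycle_arcs_conv_cyclic_adj_pairs[of "h # ys" A] unfolding cyclic_adj_pairs_def by simp

lemma ucycle_rotate_to_head:
  assumes "ucycle A cs" "h \<in> set cs"
  shows "\<exists>ys. ucycle A (h # ys) \<and> set (h # ys) = set cs \<and> cyclic_adj_pairs (h # ys) = cyclic_adj_pairs cs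
    \<and> cycle_arcs A (h # ys) = cycle_arcs A cs"
proof -
  obtain n ys where rot: "rotate n cs = h # ys"
    using rotate_to_head[OF assms(2)] by blast
  then have pairs: "cyclic_adj_pairs (h # ys) = cyclic_adj_pairs cs"
    using cyclic_adj_pairs_rotate by metis
  have "ucycle A (h # ys)"
    using assms(1) pairs unfolding ucycle_iff_cyclic_adj_pairs rot[symmetric] by simp
  moreover have "set (h # ys) = set cs"
    using rot[symmetric] by simp
  moreover have "cs \<noteq> []"
    using assms(2) by auto
  then have "cycle_arcs A (h # ys) = cycle_arcs A cs"
    using pairs cycle_arcs_conv_cyclic_adj_pairs[of "h # ys" A]
      cycle_arcs_conv_cyclic_adj_pairs[of cs A] by simp
  ultimately show ?thesis
    using pairs by blast
qed

lemma cycle_arcs_subset: "cycle_arcs A cs \<subseteq> A"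
  unfolding cycle_arcs_def by auto

lemma cycle_arcs_subset_Times: "cycle_arcs A cs \<subseteq> set cs \<times> set cs"
  unfolding cycle_arcs_def by (auto intro!: nth_mem mod_less_divisor)

lemma block_verts_cycle_arcs:
  assumes "ucycle A cs"
  shows "block_verts (cycle_arcs A cs) = set cs"
proof
  show "block_verts (cycle_arcs A cs) \<subseteq> set cs"
    using cycle_arcs_subset_Times[of A cs] unfolding block_verts_def by auto
  show "set cs \<subseteq> block_verts (cycle_arcs A cs)"
  proof
    fix x assume "x \<in> set cs"
    then obtain i where i: "i < length cs" "cs ! i = x"
      by (meson in_set_conv_nth)
    then have "uadj A (cs ! i) (cs ! ((i + 1) mod length cs))"
      using assms unfolding ucycle_def by auto
    then show "x \<in> block_verts (cycle_arcs A cs)"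
      using i unfolding uadj_def cycle_arcs_def block_verts_def by force
  qed
qed

lemma cycle_arcs_nonempty: "ucycle A cs \<Longrightarrow> cycle_arcs A cs \<noteq> {}"
  using block_verts_cycle_arcs[of A cs] unfolding ucycle_def block_verts_def by force

lemma cycle_arcs_subset_block:
  "e \<in> cycle_arcs A cs \<Longrightarrow> ucycle A cs \<Longrightarrow> cycle_arcs A cs \<subseteq> {f \<in> A. same_block A e f}"
  using cycle_arcs_subset unfolding same_block_def by blast

lemma ucycle_verts_subset_block:
  assumes "ucycle A cs" "e \<in> cycle_arcs A cs"
  shows "set cs \<subseteq> block_verts {f \<in> A. same_block A e f}"
proof -
  have "block_verts (cycle_arcs A cs) \<subseteq> block_verts {f \<in> A. same_block A e f}"
    using cycle_arcs_subset_block[OF assms(2,1)] unfolding block_verts_def by blast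
  then show ?thesis
    unfolding block_verts_cycle_arcs[OF assms(1)] .
qed

lemma ucycle_of_two_paths:
  assumes walk1: "successively (\<lambda>a b. (a, b) \<in> A) P1" "distinct P1" "P1 \<noteq> []"
    and walk2: "successively (\<lambda>a b. (a, b) \<in> A) P2" "distinct P2" "P2 \<noteq> []"
    and start: "hd P1 = hd P2" and disj: "set P2 \<inter> set (tl P1) = {}"
    and ends: "last P1 \<noteq> last P2" "h \<notin> set P1 \<union> set P2"
    and arcs: "(last P1, h) \<in> A" "(last P2, h) \<in> A"
  shows "ucycle A (h # rev P2 @ tl P1)"
proof -
  obtain s P1' where P1: "P1 = s # P1'"
    using walk1(3) by (cases P1) auto
  with start have hd_P2: "hd P2 = s"
    by simp
  define ys where "ys = rev P2 @ P1'"
  have dist: "distinct (h # ys)"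
    using walk1(2) walk2(2) disj ends(2) unfolding ys_def P1 by auto
  have len: "2 \<le> length ys"
  proof (rule ccontr)
    assume "\<not> 2 \<le> length ys"
    moreover have "length P2 \<noteq> 0" "length ys = length P2 + length P1'"
      using walk2(3) by (simp_all add: ys_def)
    ultimately have "length P1' = 0" "length P2 = 1"
      by linarith+
    then have "last P1 = hd P1" "last P2 = hd P2"
      unfolding P1 by (auto simp: length_Suc_conv)
    then show False
      using ends(1) start by simp
  qed
  then have "ys \<noteq> []"
    by auto
  have hd_ys: "hd ys = last P2"
    unfolding ys_def using walk2(3) by (simp add: hd_rev)
  have last_ys: "last ys = last P1"
    unfolding ys_def P1 using hd_P2 walk2(3) by (simp add: last_rev)
  have "successively (uadj A) (rev P2)"
    using walk2(1) by (simp add: successively_mono uadj_def)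
  moreover have "successively (uadj A) (s # P1')"
    using walk1(1) unfolding P1 by (rule successively_mono) (simp add: uadj_def)
  ultimately have "successively (uadj A) ys"
    unfolding ys_def successively_append_iff using hd_P2 walk2(3)
    by (auto simp: successively_Cons last_rev)
  then have "successively (uadj A) ([h] @ ys @ [h])"
    using \<open>ys \<noteq> []\<close> hd_ys last_ys arcs unfolding successively_append_iff
    by (auto simp: uadj_def)
  then show ?thesis
    unfolding ucycle_Cons_iff using dist len by (simp add: ys_def P1)
qed

lemma cycle_arc_endpoints_connected:
  assumes cycle: "ucycle A cs" and a: "a \<in> cycle_arcs A cs"
  shows "(fst a, snd a) \<in> ((A - {a}) \<union> (A - {a})\<inverse>)\<^sup>*"
proof -
  define T where "T = (A - {a}) \<union> (A - {a})\<inverse>"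
  have "cs \<noteq> []"
    using cycle unfolding ucycle_def by auto
  then obtain x y where xy: "(x, y) \<in> cyclic_adj_pairs cs" "a = (x, y) \<or> a = (y, x)"
    using a unfolding cycle_arcs_conv_cyclic_adj_pairs[OF \<open>cs \<noteq> []\<close>] by blast
  then have "y \<in> set cs"
    using adj_pairs_in_set[of x y "cs @ [hd cs]"] \<open>cs \<noteq> []\<close> unfolding cyclic_adj_pairs_def by auto
  then obtain ys where ys: "ucycle A (y # ys)" "cyclic_adj_pairs (y # ys) = cyclic_adj_pairs cs"
    using ucycle_rotate_to_head[OF cycle] by blast
  note ys_facts = ucycle_ConsD[OF ys(1)]
  have "(x, y) \<notin> adj_pairs ys" "(x, y) \<noteq> (y, hd ys)"
    using ys_facts(1,3) adj_pairs_in_set by fastforce+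
  then have x: "x = last ys"
    using xy(1) ys(2) cyclic_adj_pairs_Cons[OF ys_facts(1), of y] by auto
  \<comment> \<open>the rest of the cycle, from \<open>y\<close> round to \<open>x\<close>, avoids the arc \<open>a\<close>\<close>
  have "successively (\<lambda>p q. (p, q) \<in> T) (y # ys)"
    unfolding successively_iff_adj_pairs
  proof (intro ballI, clarify)
    fix p q assume pq: "(p, q) \<in> adj_pairs (y # ys)"
    have "uadj A p q"
      using ys_facts(5,7) pq adj_pairs_Cons[OF ys_facts(1)]
      unfolding successively_iff_adj_pairs by auto
    moreover have "{p, q} \<noteq> {x, y}"
      using pq adj_pairs_Cons[OF ys_facts(1), of y] adj_pairs_in_set[of p q ys] x ys_facts(1-3)
      by (auto simp: doubleton_eq_iff)
    ultimately show "(p, q) \<in> T"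
      using xy(2) unfolding T_def uadj_def by auto
  qed
  then have "(y, x) \<in> T\<^sup>*"
    using walk_rtrancl[of T "y # ys" x] x ys_facts(1) by simp
  moreover have "T\<inverse> = T"
    unfolding T_def by auto
  ultimately have "(x, y) \<in> T\<^sup>*" "(y, x) \<in> T\<^sup>*"
    by (metis rtrancl_converseI)+
  then show ?thesis
    using xy(2) unfolding T_def by auto
qed

lemma cycle_arc_not_cut:
  assumes "uconnected V A" "ucycle A cs" "a \<in> cycle_arcs A cs"
  shows "\<not> is_cut_arc V A a"
proof -
  obtain p q where a: "a = (p, q)"
    by (cases a)
  define T where "T = (A - {a}) \<union> (A - {a})\<inverse>"
  have "(p, q) \<in> T\<^sup>*"
    using cycle_arc_endpoints_connected[OF assms(2,3)] unfolding T_def a by simp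
  moreover have "T\<inverse> = T"
    unfolding T_def by auto
  ultimately have "(q, p) \<in> T\<^sup>*"
    by (metis rtrancl_converseI)
  have "A \<union> A\<inverse> \<subseteq> T\<^sup>*"
  proof
    fix e assume "e \<in> A \<union> A\<inverse>"
    then consider "e = (p, q)" | "e = (q, p)" | "e \<in> T"
      unfolding T_def a by auto
    then show "e \<in> T\<^sup>*"
      using \<open>(p, q) \<in> T\<^sup>*\<close> \<open>(q, p) \<in> T\<^sup>*\<close> by cases auto
  qed
  then have "(A \<union> A\<inverse>)\<^sup>* \<subseteq> T\<^sup>*"
    by (simp add: rtrancl_subset_rtrancl)
  then show ?thesis
    using assms(1) unfolding is_cut_arc_def uconnected_def T_def by blast
qed

lemma ucycle_of_detour:
  assumes arc: "(u, w) \<in> A" "(w, u) \<notin> A"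
    and detour: "successively (\<lambda>x y. (x, y) \<in> (A - {(u, w)}) \<union> (A - {(u, w)})\<inverse>) (w # ys)"
      "distinct (w # ys)" "ys \<noteq> []" "last ys = u"
  shows "ucycle A (w # ys)" "(u, w) \<in> cycle_arcs A (w # ys)"
proof -
  have "2 \<le> length ys"
  proof (rule ccontr)
    assume "\<not> 2 \<le> length ys"
    then have "ys = [u]"
      using detour(3,4) by (cases ys) (auto simp: Suc_le_eq)
    then show False
      using detour(1) arc by auto
  qed
  moreover have "successively (uadj A) ((w # ys) @ [w])"
  proof -
    have "successively (uadj A) (w # ys)"
      using detour(1) by (rule successively_mono) (auto simp: uadj_def)
    moreover have "uadj A (last (w # ys)) (hd [w])"
      using detour(3,4) arc(1) by (simp add: uadj_def)
    ultimately show ?thesis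
      unfolding successively_append_iff by simp
  qed
  ultimately show "ucycle A (w # ys)"
    unfolding ucycle_Cons_iff using detour(2) by simp
  have "(u, w) \<in> adj_pairs (w # ys @ [w])"
    using adj_pairs_append[of "w # ys" "[w]"] detour(3,4) by simp
  then show "(u, w) \<in> cycle_arcs A (w # ys)"
    unfolding cycle_arcs_Cons using arc(1) by blast
qed

lemma acyclic_arc_on_no_cycle_is_cut:
  assumes "A \<subseteq> V \<times> V" "acyclic A" "a \<in> A"
    and no_cycle: "\<And>cs. ucycle A cs \<Longrightarrow> a \<notin> cycle_arcs A cs"
  shows "is_cut_arc V A a"
proof -
  obtain u w where a: "a = (u, w)"
    by (cases a)
  have "(u, w) \<in> A\<^sup>+"
    using assms(3) a by auto
  then have "u \<noteq> w" "(w, u) \<notin> A"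
    using assms(2) trancl_into_trancl[of u w A u] unfolding acyclic_def by auto
  show ?thesis
    unfolding is_cut_arc_def
  proof (intro conjI notI \<open>a \<in> A\<close>)
    assume "uconnected V (A - {a})"
    moreover have "u \<in> V" "w \<in> V"
      using assms(1,3) a by auto
    ultimately have "(w, u) \<in> ((A - {a}) \<union> (A - {a})\<inverse>)\<^sup>*"
      unfolding uconnected_def by simp
    then obtain ps where ps: "ps \<noteq> []" "hd ps = w" "last ps = u" "distinct ps"
      "successively (\<lambda>x y. (x, y) \<in> (A - {a}) \<union> (A - {a})\<inverse>) ps"
      using rtrancl_imp_distinct_walk[of w u] by blast
    \<comment> \<open>a detour from \<open>w\<close> back to \<open>u\<close> avoiding \<open>a\<close> closes a cycle through \<open>a\<close>\<close>
    obtain ys where "ps = w # ys" "ys \<noteq> []" "last ys = u"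
      using ps(1-3) \<open>u \<noteq> w\<close> by (cases ps) (auto split: if_splits)
    then show False
      using ucycle_of_detour[of u w A ys] ps(4,5) assms(3) \<open>(w, u) \<notin> A\<close> no_cycle a by auto
  qed
qed

section \<open>Binary level-1 networks\<close>

definition hybrid_verts :: "'v set \<Rightarrow> ('v \<times> 'v) set \<Rightarrow> 'v set" where
  "hybrid_verts V A = {v \<in> V. is_hybrid A v}"

definition arcs_on_cycles :: "('v \<times> 'v) set \<Rightarrow> ('v \<times> 'v) set" where
  "arcs_on_cycles A = {a. \<exists>cs. ucycle A cs \<and> a \<in> cycle_arcs A cs}"

definition tree_arcs :: "('v \<times> 'v) set \<Rightarrow> ('v \<times> 'v) set" where
  "tree_arcs A = {(u, v) \<in> A. \<not> is_hybrid A v}"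

definition tree_interval :: "('v \<times> 'v) set \<Rightarrow> 'v \<Rightarrow> 'v \<Rightarrow> 'v set" where
  "tree_interval A s p = {v. (s, v) \<in> (tree_arcs A)\<^sup>* \<and> (v, p) \<in> (tree_arcs A)\<^sup>*}"

locale binary_level1_net =
  fixes V :: "'v set" and A :: "('v \<times> 'v) set" and X :: "'v set" and r :: 'v
  assumes binary_level1: "binary_level1 V A X r"
begin

lemma finite_V: "finite V" and arcs_subset: "A \<subseteq> V \<times> V" and acyclic_A: "acyclic A"
  and root_in_V: "r \<in> V" and indeg_root: "indeg A r = 0" and outdeg_root: "outdeg A r = 2"
  and leaves_eq: "X = leaves V A"
  and inner_vert: "\<And>v. v \<in> V - {r} - X \<Longrightarrow> is_split A v \<or> is_hybrid A v"
  and split_outdeg: "\<And>v. v \<in> V \<Longrightarrow> is_split A v \<Longrightarrow> outdeg A v = 2"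
  and hybrid_degrees: "\<And>v. v \<in> V \<Longrightarrow> is_hybrid A v \<Longrightarrow> indeg A v = 2 \<and> outdeg A v = 1"
  and block_hybrids_le1: "\<And>C. C \<in> blocks A \<Longrightarrow> card {v \<in> block_verts C. is_hybrid A v} \<le> 1"
  and length_ucycle_ge4: "\<And>cs. ucycle A cs \<Longrightarrow> length cs \<ge> 4"
  and unique_root: "\<And>v. v \<in> V \<Longrightarrow> indeg A v = 0 \<Longrightarrow> v = r"
  using binary_level1 unfolding binary_level1_def binary_network_def phylo_network_def by auto

lemma finite_A: "finite A"
  using finite_V arcs_subset finite_subset by blast

lemma finite_preds: "finite {u. (u, v) \<in> A}"
  by (rule finite_subset[OF _ finite_imageI[OF finite_A, of fst]]) force

lemma finite_succs: "finite {w. (v, w) \<in> A}"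
  by (rule finite_subset[OF _ finite_imageI[OF finite_A, of snd]]) force

lemma arc_in_V: "(u, v) \<in> A \<Longrightarrow> u \<in> V \<and> v \<in> V"
  using arcs_subset by auto

lemma leaves_subset: "X \<subseteq> V"
  using leaves_eq unfolding leaves_def by auto

lemma leaf_degrees: "x \<in> X \<Longrightarrow> x \<in> V \<and> indeg A x = 1 \<and> outdeg A x = 0"
  using leaves_eq unfolding leaves_def by auto

lemma no_path_back: "(u, v) \<in> A \<Longrightarrow> (v, u) \<in> A\<^sup>* \<Longrightarrow> False"
  using acyclic_A unfolding acyclic_def by (meson rtrancl_into_trancl2)

lemma no_path_back_trancl: "(u, v) \<in> A\<^sup>+ \<Longrightarrow> (v, u) \<in> A\<^sup>* \<Longrightarrow> False"
  using acyclic_A unfolding acyclic_def by (meson trancl_rtrancl_trancl)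

lemma non_hybrid_indeg_le1:
  assumes "v \<in> V" "\<not> is_hybrid A v"
  shows "indeg A v \<le> 1"
proof -
  consider "v = r" | "v \<in> X" | "v \<in> V - {r} - X"
    using assms by blast
  then show ?thesis
    using indeg_root leaf_degrees inner_vert assms unfolding is_split_def by cases force+
qed

lemma non_hybrid_unique_parent:
  assumes "\<not> is_hybrid A v" "(a, v) \<in> A" "(b, v) \<in> A"
  shows "a = b"
proof -
  have "card {u. (u, v) \<in> A} \<le> 1"
    using non_hybrid_indeg_le1 assms arc_in_V unfolding indeg_def by blast
  then show ?thesis
    using assms(2,3) finite_preds by (auto simp: card_le_Suc0_iff_eq)
qed

lemma two_parents_hybrid: "(p1, h) \<in> A \<Longrightarrow> (p2, h) \<in> A \<Longrightarrow> p1 \<noteq> p2 \<Longrightarrow> is_hybrid A h"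
  using non_hybrid_unique_parent by blast

lemma hybrid_parents:
  assumes "is_hybrid A h" "(p1, h) \<in> A" "(p2, h) \<in> A" "p1 \<noteq> p2" "(u, h) \<in> A"
  shows "u = p1 \<or> u = p2"
proof (rule ccontr)
  assume "\<not> (u = p1 \<or> u = p2)"
  then have "card {u, p1, p2} \<le> indeg A h"
    unfolding indeg_def using assms(2,3,5) by (intro card_mono[OF finite_preds]) auto
  then show False
    using hybrid_degrees[OF _ assms(1)] arc_in_V[OF assms(2)] \<open>\<not> (u = p1 \<or> u = p2)\<close> assms(4)
    by simp
qed

lemma non_hybrid_non_leaf_outdeg:
  assumes "v \<in> V" "\<not> is_hybrid A v" "v \<notin> X"
  shows "outdeg A v = 2"
  using assms outdeg_root inner_vert split_outdeg by (cases "v = r") auto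

lemma reachable_from_root: "v \<in> V \<Longrightarrow> (r, v) \<in> A\<^sup>*"
proof (induction v rule: wf_induct_rule[OF finite_acyclic_wf[OF finite_A acyclic_A]])
  case (1 v)
  show ?case
  proof (cases "v = r")
    case False
    then have "{u. (u, v) \<in> A} \<noteq> {}"
      using unique_root 1 unfolding indeg_def by force
    then obtain u where "(u, v) \<in> A"
      by blast
    then show ?thesis
      using 1 arc_in_V by (meson rtrancl.simps)
  qed simp
qed

lemma uconnected_network: "uconnected V A"
proof -
  have "(r, v) \<in> (A \<union> A\<inverse>)\<^sup>*" if "v \<in> V" for v
    using reachable_from_root[OF that] rtrancl_mono[of A "A \<union> A\<inverse>"] by blast
  moreover have "(v, r) \<in> (A \<union> A\<inverse>)\<^sup>*" if "v \<in> V" for v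
    using reachable_from_root[OF that] rtrancl_mono[of "A\<inverse>" "A \<union> A\<inverse>"]
    by (metis rtrancl_converseI subset_iff sup.cobounded2)
  ultimately show ?thesis
    unfolding uconnected_def by (meson rtrancl_trans)
qed

lemma tree_arcs_unique_pred: "(a, c) \<in> tree_arcs A \<Longrightarrow> (b, c) \<in> tree_arcs A \<Longrightarrow> a = b"
  unfolding tree_arcs_def using non_hybrid_unique_parent by blast

lemma tree_arcs_subset: "tree_arcs A \<subseteq> A"
  unfolding tree_arcs_def by auto

lemma tree_interval_path:
  assumes "successively (\<lambda>a b. (a, b) \<in> tree_arcs A) (s # D)"
  shows "tree_interval A s (last (s # D)) = set (s # D)"
  unfolding tree_interval_def
proof
  show "set (s # D) \<subseteq> {v. (s, v) \<in> (tree_arcs A)\<^sup>* \<and> (v, last (s # D)) \<in> (tree_arcs A)\<^sup>*}"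
    using walk_rtrancl[OF assms] by auto
  show "{v. (s, v) \<in> (tree_arcs A)\<^sup>* \<and> (v, last (s # D)) \<in> (tree_arcs A)\<^sup>*} \<subseteq> set (s # D)"
  proof clarify
    fix v assume sv: "(s, v) \<in> (tree_arcs A)\<^sup>*" and vl: "(v, last (s # D)) \<in> (tree_arcs A)\<^sup>*"
    have "v \<in> set (s # D) \<or> (v, s) \<in> (tree_arcs A)\<^sup>*"
      using unique_pred_rtrancl_to_walk[OF assms _ tree_arcs_unique_pred vl] by simp
    moreover have "v = s" if "(v, s) \<in> (tree_arcs A)\<^sup>*"
    proof (rule ccontr)
      assume "v \<noteq> s"
      with that have "(v, s) \<in> A\<^sup>+"
        using trancl_mono[OF _ tree_arcs_subset] by (meson rtranclD)
      moreover have "(s, v) \<in> A\<^sup>*"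
        using sv rtrancl_mono[OF tree_arcs_subset] by blast
      ultimately show False
        using no_path_back_trancl by blast
    qed
    ultimately show "v \<in> set (s # D)"
      by auto
  qed
qed

text \<open>Both vertices are tree ancestors of \<open>q1\<close>, hence comparable, and the lower one lies in
  both intervals of the upper one.\<close>

lemma tree_interval_meet_unique:
  assumes "tree_interval A s q1 \<inter> tree_interval A s q2 = {s}"
    and "tree_interval A s' q1 \<inter> tree_interval A s' q2 = {s'}"
  shows "s = s'"
proof -
  have lower_eq: "t = t'" if "tree_interval A t q1 \<inter> tree_interval A t q2 = {t}"
    "tree_interval A t' q1 \<inter> tree_interval A t' q2 = {t'}" "(t, t') \<in> (tree_arcs A)\<^sup>*" for t t'
  proof -
    have "t' \<in> tree_interval A t' q1 \<inter> tree_interval A t' q2"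
      using that(2) by simp
    then have "t' \<in> tree_interval A t q1 \<inter> tree_interval A t q2"
      using that(3) unfolding tree_interval_def by blast
    then show ?thesis
      using that(1) by simp
  qed
  have "(s, q1) \<in> (tree_arcs A)\<^sup>*" "(s', q1) \<in> (tree_arcs A)\<^sup>*"
    using assms unfolding tree_interval_def by auto
  then have "(s, s') \<in> (tree_arcs A)\<^sup>* \<or> (s', s) \<in> (tree_arcs A)\<^sup>*"
    using unique_pred_rtrancl_comparable[where R = "tree_arcs A"] tree_arcs_unique_pred by metis
  then show ?thesis
    using lower_eq[OF assms] lower_eq[OF assms(2,1)] by auto
qed

lemma block_hybrid_unique:
  assumes "B \<in> blocks A" "v \<in> block_verts B" "w \<in> block_verts B" "is_hybrid A v" "is_hybrid A w"
  shows "v = w"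
proof -
  have "finite (block_verts B)"
    using assms(1) finite_A unfolding blocks_def block_verts_def by auto
  then have "card {v, w} \<le> card {v \<in> block_verts B. is_hybrid A v}"
    using assms(2-5) by (intro card_mono) auto
  also have "\<dots> \<le> 1"
    using block_hybrids_le1[OF assms(1)] .
  finally show ?thesis
    by (cases "v = w") auto
qed

lemma block_of_arc: "e \<in> A \<Longrightarrow> {f \<in> A. same_block A e f} \<in> blocks A"
  unfolding blocks_def by blast

lemma ucycle_hybrid_unique:
  assumes "ucycle A cs" "v \<in> set cs" "w \<in> set cs" "is_hybrid A v" "is_hybrid A w"
  shows "v = w"
proof -
  obtain e where e: "e \<in> cycle_arcs A cs"
    using cycle_arcs_nonempty[OF assms(1)] by blast
  have "{f \<in> A. same_block A e f} \<in> blocks A"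
    using block_of_arc e cycle_arcs_subset by blast
  then show ?thesis
    using block_hybrid_unique ucycle_verts_subset_block[OF assms(1) e] assms(2-5) by blast
qed

lemma wf_converse_trancl: "wf ((A\<^sup>+)\<inverse>)"
  using wf_trancl[OF finite_acyclic_wf_converse[OF finite_A acyclic_A]] by (simp add: trancl_converse)

text \<open>A minimal vertex of a cycle with respect to the ancestor order has both of its cycle
  neighbours as parents.\<close>

lemma ucycle_rotate_to_sink:
  assumes "ucycle A cs"
  shows "\<exists>h ys. ucycle A (h # ys) \<and> set (h # ys) = set cs \<and> cycle_arcs A (h # ys) = cycle_arcs A cs
     \<and> (hd ys, h) \<in> A \<and> (last ys, h) \<in> A"
proof -
  have "cs \<noteq> []"
    using assms unfolding ucycle_def by (metis list.size(3) not_numeral_le_zero)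
  then obtain h where h: "h \<in> set cs" "\<And>y. (y, h) \<in> (A\<^sup>+)\<inverse> \<Longrightarrow> y \<notin> set cs"
    using wfE_min[OF wf_converse_trancl, of "hd cs" "set cs"] by (metis hd_in_set)
  obtain ys where ys: "ucycle A (h # ys)" "set (h # ys) = set cs" "cycle_arcs A (h # ys) = cycle_arcs A cs"
    using ucycle_rotate_to_head[OF assms h(1)] by blast
  note cyc = ucycle_ConsD[OF ys(1)]
  have "hd ys \<in> set cs" "last ys \<in> set cs"
    using ys(2) cyc(1) by (metis hd_in_set last_in_set list.set_intros(2))+
  then have "(h, hd ys) \<notin> A" "(h, last ys) \<notin> A"
    using h(2) by auto
  then have "(hd ys, h) \<in> A" "(last ys, h) \<in> A"
    using cyc(5,6) unfolding uadj_def by auto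
  with ys show ?thesis
    by blast
qed

lemma ucycle_verts_in_V:
  assumes "ucycle A cs"
  shows "set cs \<subseteq> V"
proof -
  have "block_verts (cycle_arcs A cs) \<subseteq> V"
    using cycle_arcs_subset[of A cs] arcs_subset unfolding block_verts_def by auto
  then show ?thesis
    unfolding block_verts_cycle_arcs[OF assms] .
qed

lemma leaf_not_on_ucycle:
  assumes "ucycle A cs" "x \<in> set cs"
  shows "x \<notin> X"
proof
  assume x: "x \<in> X"
  obtain ys where "ucycle A (x # ys)"
    using ucycle_rotate_to_head[OF assms] by blast
  note cyc = ucycle_ConsD[OF this]
  have "{w. (x, w) \<in> A} = {}"
    using leaf_degrees[OF x] finite_succs unfolding outdeg_def by simp
  then have "(hd ys, x) \<in> A" "(last ys, x) \<in> A"
    using cyc(5,6) unfolding uadj_def by auto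
  then have "is_hybrid A x"
    using two_parents_hybrid cyc(2) by blast
  then show False
    using hybrid_degrees leaf_degrees[OF x] by auto
qed

end

text \<open>A cycle read from its hybrid (sink) \<open>h\<close>: going round \<open>h, L1, s, L2\<close>, the arcs descend
  from the source \<open>s\<close> along \<open>rev L1\<close> and along \<open>L2\<close>, and both branches end in \<open>h\<close>.\<close>

locale sink_cycle = binary_level1_net +
  fixes h :: 'v and ys L1 :: "'v list" and s :: 'v and L2 :: "'v list"
  assumes ucycle: "ucycle A (h # ys)"
    and hd_to_sink: "(hd ys, h) \<in> A" and last_to_sink: "(last ys, h) \<in> A"
    and ys_eq: "ys = L1 @ s # L2"
    and left_branch: "successively (\<lambda>a b. (b, a) \<in> A) (L1 @ [s])"
    and right_branch: "successively (\<lambda>a b. (a, b) \<in> A) (s # L2)"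
begin

lemmas cycle_facts = ucycle_ConsD[OF ucycle]

lemma sink_hybrid: "is_hybrid A h" "h \<in> V"
  using two_parents_hybrid[OF hd_to_sink last_to_sink cycle_facts(2)] arc_in_V[OF hd_to_sink] by auto

lemma non_hybrid_on_cycle: "v \<in> set ys \<Longrightarrow> \<not> is_hybrid A v"
  using ucycle_hybrid_unique[OF ucycle, of v h] sink_hybrid cycle_facts(3) by auto

lemma source_ne_sink: "s \<noteq> h"
  using cycle_facts(3) ys_eq by auto

lemma branches_in_tree_arcs:
  "successively (\<lambda>a b. (a, b) \<in> tree_arcs A) (s # rev L1)"
  "successively (\<lambda>a b. (a, b) \<in> tree_arcs A) (s # L2)"
proof -
  have tree: "successively (\<lambda>a b. (a, b) \<in> tree_arcs A) D"
    if "successively (\<lambda>a b. (a, b) \<in> A) D" "set D \<subseteq> set ys" for D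
    using that(1) by (rule successively_mono) (use that(2) non_hybrid_on_cycle in \<open>auto simp: tree_arcs_def\<close>)
  have "successively (\<lambda>a b. (a, b) \<in> A) (rev (L1 @ [s]))"
    unfolding successively_rev using left_branch .
  then have "successively (\<lambda>a b. (a, b) \<in> A) (s # rev L1)"
    by (simp del: successively_rev)
  then show "successively (\<lambda>a b. (a, b) \<in> tree_arcs A) (s # rev L1)"
    by (rule tree) (auto simp: ys_eq)
  show "successively (\<lambda>a b. (a, b) \<in> tree_arcs A) (s # L2)"
    using right_branch by (rule tree) (auto simp: ys_eq)
qed

lemma branch_ends: "last (s # rev L1) = hd ys" "last (s # L2) = last ys"
  using ys_eq by (cases L1; auto simp: last_rev)+

lemma cycle_verts_eq: "set (h # ys) = insert h (tree_interval A s (hd ys) \<union> tree_interval A s (last ys))"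
  using tree_interval_path[OF branches_in_tree_arcs(1)] tree_interval_path[OF branches_in_tree_arcs(2)]
    branch_ends ys_eq by auto

lemma tree_intervals_inter: "tree_interval A s (hd ys) \<inter> tree_interval A s (last ys) = {s}"
  using tree_interval_path[OF branches_in_tree_arcs(1)] tree_interval_path[OF branches_in_tree_arcs(2)]
    branch_ends ys_eq cycle_facts(4) by auto

lemma source_reaches:
  assumes "v \<in> set (h # ys)"
  shows "(s, v) \<in> A\<^sup>*"
proof -
  have in_interval: "(s, u) \<in> A\<^sup>*" if "u \<in> tree_interval A s p" for u p
    using that rtrancl_mono[OF tree_arcs_subset] unfolding tree_interval_def by blast
  have last_in: "last (s # rev L1) \<in> set (s # rev L1)"
    by (rule last_in_set) simp
  have "(s, hd ys) \<in> (tree_arcs A)\<^sup>*"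
    using walk_rtrancl[OF branches_in_tree_arcs(1) last_in, THEN conjunct1] branch_ends(1) by simp
  then have "(s, hd ys) \<in> A\<^sup>*"
    using rtrancl_mono[OF tree_arcs_subset] by blast
  show ?thesis
  proof (cases "v = h")
    case True
    then show ?thesis
      using \<open>(s, hd ys) \<in> A\<^sup>*\<close> hd_to_sink by (simp add: rtrancl.rtrancl_into_rtrancl)
  next
    case False
    have "v \<in> insert h (tree_interval A s (hd ys) \<union> tree_interval A s (last ys))"
      using assms unfolding cycle_verts_eq .
    with False show ?thesis
      by (auto dest: in_interval)
  qed
qed

lemma parent_on_cycle:
  assumes "v \<in> set ys" "v \<noteq> s"
  shows "\<exists>w. (w, v) \<in> A \<and> ((w, v) \<in> adj_pairs ys \<or> (v, w) \<in> adj_pairs ys)"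
proof -
  have sub: "adj_pairs (L1 @ [s]) \<subseteq> adj_pairs ys" "adj_pairs (s # L2) \<subseteq> adj_pairs ys"
    using adj_pairs_append_left[of "L1 @ [s]" L2] adj_pairs_append_right[of "s # L2" L1]
    unfolding ys_eq by simp_all
  have "v \<in> set L1 \<or> v \<in> set L2"
    using assms ys_eq by auto
  then show ?thesis
  proof
    assume "v \<in> set L1"
    then have "v \<in> set (L1 @ [s])" "v \<noteq> last (L1 @ [s])"
      using cycle_facts(4) ys_eq by auto
    then show ?thesis
      using successively_succ_in_adj_pairs[OF left_branch] sub(1) by blast
  next
    assume "v \<in> set L2"
    then have "v \<in> set (s # L2)" "v \<noteq> hd (s # L2)"
      using cycle_facts(4) ys_eq by auto
    then show ?thesis
      using successively_pred_in_adj_pairs[OF right_branch] sub(2) by blast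
  qed
qed

lemma cycle_no_chords: "A \<inter> (set (h # ys) \<times> set (h # ys)) = cycle_arcs A (h # ys)"
proof
  show "cycle_arcs A (h # ys) \<subseteq> A \<inter> (set (h # ys) \<times> set (h # ys))"
    using cycle_arcs_subset cycle_arcs_subset_Times by blast
  have pairs: "adj_pairs (h # ys @ [h]) = {(h, hd ys)} \<union> adj_pairs ys \<union> {(last ys, h)}"
    using cyclic_adj_pairs_Cons[OF cycle_facts(1), of h] unfolding cyclic_adj_pairs_def by simp
  show "A \<inter> (set (h # ys) \<times> set (h # ys)) \<subseteq> cycle_arcs A (h # ys)"
  proof clarify
    fix u v assume uv: "(u, v) \<in> A" "u \<in> set (h # ys)" "v \<in> set (h # ys)"
    have "(u, v) \<in> adj_pairs (h # ys @ [h]) \<or> (v, u) \<in> adj_pairs (h # ys @ [h])"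
    proof (cases "v = h")
      case True
      then have "u = hd ys \<or> u = last ys"
        using hybrid_parents[OF sink_hybrid(1) hd_to_sink last_to_sink cycle_facts(2)] uv(1) by blast
      then show ?thesis
        using pairs True by auto
    next
      case False
      then have v: "v \<in> set ys"
        using uv(3) by simp
      show ?thesis
      proof (cases "v = s")
        case True
        then show ?thesis
          using source_reaches[OF uv(2)] no_path_back uv(1) by blast
      next
        case False
        obtain w where w: "(w, v) \<in> A" "(w, v) \<in> adj_pairs ys \<or> (v, w) \<in> adj_pairs ys"
          using parent_on_cycle[OF v False] by blast
        moreover have "w = u"
          using non_hybrid_unique_parent[OF non_hybrid_on_cycle[OF v]] uv(1) w(1) by blast
        ultimately show ?thesis
          using pairs by auto
      qed
    qed
    then show "(u, v) \<in> cycle_arcs A (h # ys)"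
      using uv(1) unfolding cycle_arcs_Cons by blast
  qed
qed

lemma indeg_within_cycle:
  assumes "v \<in> set (h # ys)"
  shows "card {u \<in> set (h # ys). (u, v) \<in> A} = (if v = h then 2 else if v = s then 0 else 1)"
proof -
  consider "v = h" | "v = s" | "v \<in> set ys" "v \<noteq> s"
    using assms by auto
  then show ?thesis
  proof cases
    case 1
    then have "{u \<in> set (h # ys). (u, v) \<in> A} = {hd ys, last ys}"
      using hybrid_parents[OF sink_hybrid(1) hd_to_sink last_to_sink cycle_facts(2)]
        hd_to_sink last_to_sink cycle_facts(1) by auto
    then show ?thesis
      using 1 cycle_facts(2) by simp
  next
    case 2
    then have "{u \<in> set (h # ys). (u, v) \<in> A} = {}"
      using source_reaches no_path_back by blast
    then show ?thesis
      using 2 source_ne_sink by (simp only: card.empty) simp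
  next
    case 3
    obtain w where w: "(w, v) \<in> A" "(w, v) \<in> adj_pairs ys \<or> (v, w) \<in> adj_pairs ys"
      using parent_on_cycle[OF 3] by blast
    then have "w \<in> set (h # ys)"
      using adj_pairs_in_set by fastforce
    then have "{u \<in> set (h # ys). (u, v) \<in> A} = {w}"
      using w(1) non_hybrid_unique_parent[OF non_hybrid_on_cycle[OF 3(1)]] by auto
    then show ?thesis
      using 3 cycle_facts(3) by auto
  qed
qed

text \<open>Counted by heads, the arcs of the cycle enter \<open>h\<close> twice, \<open>s\<close> never, and every other
  vertex once.\<close>

lemma card_cycle_arcs: "card (cycle_arcs A (h # ys)) = length (h # ys)"
proof -
  define W where "W = set (h # ys)"
  have W: "finite W" "h \<in> W" "s \<in> W" "s \<noteq> h"
    using source_ne_sink by (auto simp: W_def ys_eq)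
  have "cycle_arcs A (h # ys) = {(u, v) \<in> A \<inter> (W \<times> W). v \<in> W}"
    using cycle_no_chords unfolding W_def by auto
  also have "card \<dots> = (\<Sum>v\<in>W. card {u. (u, v) \<in> A \<inter> (W \<times> W)})"
    by (rule card_arcs_into_eq_sum) (use W(1) in \<open>auto intro: finite_subset\<close>)
  also have "\<dots> = (\<Sum>v\<in>W. card {u \<in> W. (u, v) \<in> A})"
    by (intro sum.cong refl arg_cong[where f = card]) auto
  also have "\<dots> = 2 + (\<Sum>v\<in>W - {h}. card {u \<in> W. (u, v) \<in> A})"
    using sum.remove[OF W(1,2), of "\<lambda>v. card {u \<in> W. (u, v) \<in> A}"] indeg_within_cycle W(2)
    unfolding W_def by simp
  also have "(\<Sum>v\<in>W - {h}. card {u \<in> W. (u, v) \<in> A}) = 0 + 1 * (card (W - {h}) - 1)"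
    using sum_eq_except_one[of "W - {h}" s _ 1] indeg_within_cycle W unfolding W_def by simp
  also have "2 + (0 + 1 * (card (W - {h}) - 1)) = card W"
    using W card_mono[of W "{h, s}"] by simp
  finally show ?thesis
    unfolding W_def using cycle_facts(3,4) by (simp add: distinct_card)
qed

text \<open>Counted by tails, the cycle vertices emit one arc at \<open>h\<close> and two elsewhere, and all
  but the arcs of the cycle itself leave it.\<close>

lemma card_outgoing_arcs:
  "card (outgoing_arcs A (cycle_arcs A (h # ys))) + 1 = card (cycle_arcs A (h # ys))"
proof -
  define W where "W = set (h # ys)"
  define C where "C = cycle_arcs A (h # ys)"
  have W: "finite W" "h \<in> W" "card W = card C"
    using card_cycle_arcs cycle_facts(3,4) unfolding W_def C_def by (simp_all add: distinct_card)
  have "{(u, w) \<in> A. u \<in> W} = C \<union> outgoing_arcs A C" "C \<inter> outgoing_arcs A C = {}"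
    using block_verts_cycle_arcs[OF ucycle] cycle_no_chords
    unfolding outgoing_arcs_def C_def W_def by auto
  moreover have "finite C" "finite (outgoing_arcs A C)"
    using finite_A cycle_arcs_subset unfolding C_def outgoing_arcs_def
    by (auto intro: finite_subset)
  ultimately have "card C + card (outgoing_arcs A C) = card {(u, w) \<in> A. u \<in> W}"
    by (simp add: card_Un_disjoint)
  also have "\<dots> = (\<Sum>u\<in>W. outdeg A u)"
    unfolding outdeg_def using card_arcs_from_eq_sum[OF W(1)] finite_succs by blast
  also have "\<dots> = 1 + 2 * (card W - 1)"
  proof (rule trans[OF sum_eq_except_one[OF W(1,2)]])
    fix v assume "v \<in> W" "v \<noteq> h"
    then have "v \<in> set ys"
      unfolding W_def by simp
    then show "outdeg A v = 2"
      using non_hybrid_non_leaf_outdeg non_hybrid_on_cycle leaf_not_on_ucycle[OF ucycle] ucycle_verts_in_V[OF ucycle]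
      by auto
  qed (use hybrid_degrees[OF sink_hybrid(2,1)] in simp)
  moreover have "card W \<ge> 1"
    using W(1,2) by (metis One_nat_def Suc_leI card_gt_0_iff empty_iff)
  ultimately show ?thesis
    using W(3) unfolding C_def by arith
qed

end

context binary_level1_net
begin

lemma sink_cycle_exists:
  assumes "ucycle A cs"
  obtains h ys L1 s L2 where "sink_cycle V A X r h ys L1 s L2" "set (h # ys) = set cs"
    "cycle_arcs A (h # ys) = cycle_arcs A cs"
proof -
  obtain h ys where hys: "ucycle A (h # ys)" "set (h # ys) = set cs"
    "cycle_arcs A (h # ys) = cycle_arcs A cs" "(hd ys, h) \<in> A" "(last ys, h) \<in> A"
    using ucycle_rotate_to_sink[OF assms] by blast
  note cyc = ucycle_ConsD[OF hys(1)]
  have "is_hybrid A h"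
    using two_parents_hybrid hys(4,5) cyc(2) by blast
  then have "\<not> is_hybrid A v" if "v \<in> set ys" for v
    using ucycle_hybrid_unique[OF hys(1), of v h] that cyc(3) by auto
  then have unique: "\<forall>v\<in>set ys. \<forall>a b. (a, v) \<in> A \<longrightarrow> (b, v) \<in> A \<longrightarrow> a = b"
    using non_hybrid_unique_parent by blast
  have "successively (\<lambda>a b. (a, b) \<in> A \<or> (b, a) \<in> A) ys"
    using cyc(7) unfolding uadj_def .
  then obtain L1 s L2 where "ys = L1 @ s # L2"
    "successively (\<lambda>a b. (b, a) \<in> A) (L1 @ [s])" "successively (\<lambda>a b. (a, b) \<in> A) (s # L2)"
    using unique_pred_zigzag_valley[OF _ cyc(4,1) unique] by blast
  then have "sink_cycle V A X r h ys L1 s L2"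
    using hys by unfold_locales
  then show thesis
    by (rule that[OF _ hys(2,3)])
qed

lemma card_cycle_arcs_ucycle:
  assumes "ucycle A cs"
  shows "card (cycle_arcs A cs) = length cs"
proof -
  obtain h ys L1 s L2 where st: "sink_cycle V A X r h ys L1 s L2"
    and eq: "set (h # ys) = set cs" "cycle_arcs A (h # ys) = cycle_arcs A cs"
    using sink_cycle_exists[OF assms] .
  have "distinct (h # ys)"
    using sink_cycle.cycle_facts(3,4)[OF st] by simp
  moreover have "distinct cs"
    using assms unfolding ucycle_def by blast
  ultimately have "length (h # ys) = length cs"
    using eq(1) by (metis distinct_card)
  then show ?thesis
    using sink_cycle.card_cycle_arcs[OF st] eq(2) by simp
qed

lemma ucycle_has_hybrid:
  assumes "ucycle A cs"
  shows "\<exists>h\<in>set cs. is_hybrid A h"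
proof -
  obtain h ys L1 s L2 where st: "sink_cycle V A X r h ys L1 s L2"
    and eq: "set (h # ys) = set cs" "cycle_arcs A (h # ys) = cycle_arcs A cs"
    using sink_cycle_exists[OF assms] .
  have "h \<in> set cs"
    using eq(1) by (metis list.set_intros(1))
  then show ?thesis
    using sink_cycle.sink_hybrid(1)[OF st] by blast
qed

text \<open>Both cycles consist of \<open>h\<close> and the tree paths from their sources to the two parents
  of \<open>h\<close>, so they coincide once their sources do.\<close>

lemma same_hybrid_same_cycle:
  assumes cyc1: "ucycle A cs1" and cyc2: "ucycle A cs2"
    and h: "is_hybrid A h" "h \<in> set cs1" "h \<in> set cs2"
  shows "cycle_arcs A cs1 = cycle_arcs A cs2"
proof -
  obtain h1 ys1 La s1 Lb where st1: "sink_cycle V A X r h1 ys1 La s1 Lb"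
    and eq1: "set (h1 # ys1) = set cs1" "cycle_arcs A (h1 # ys1) = cycle_arcs A cs1"
    using sink_cycle_exists[OF cyc1] .
  obtain h2 ys2 Lc s2 Ld where st2: "sink_cycle V A X r h2 ys2 Lc s2 Ld"
    and eq2: "set (h2 # ys2) = set cs2" "cycle_arcs A (h2 # ys2) = cycle_arcs A cs2"
    using sink_cycle_exists[OF cyc2] .
  have "h1 = h" "h2 = h"
    using ucycle_hybrid_unique[OF cyc1, of h1 h] ucycle_hybrid_unique[OF cyc2, of h2 h]
      sink_cycle.sink_hybrid(1)[OF st1] sink_cycle.sink_hybrid(1)[OF st2] eq1(1) eq2(1) h
    by auto
  define q1 where "q1 = hd ys1"
  define q2 where "q2 = last ys1"
  have par1: "(q1, h) \<in> A" "(q2, h) \<in> A" "q1 \<noteq> q2"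
    using sink_cycle.hd_to_sink[OF st1] sink_cycle.last_to_sink[OF st1] sink_cycle.cycle_facts(2)[OF st1]
      \<open>h1 = h\<close> unfolding q1_def q2_def by auto
  have par2: "(hd ys2, h) \<in> A" "(last ys2, h) \<in> A" "hd ys2 \<noteq> last ys2"
    using sink_cycle.hd_to_sink[OF st2] sink_cycle.last_to_sink[OF st2] sink_cycle.cycle_facts(2)[OF st2]
      \<open>h2 = h\<close> by auto
  have "(hd ys2 = q1 \<and> last ys2 = q2) \<or> (hd ys2 = q2 \<and> last ys2 = q1)"
    using hybrid_parents[OF h(1) par1] par2 by metis
  then have verts: "set cs1 = insert h (tree_interval A s1 q1 \<union> tree_interval A s1 q2)"
      "set cs2 = insert h (tree_interval A s2 q1 \<union> tree_interval A s2 q2)"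
    and inter: "tree_interval A s1 q1 \<inter> tree_interval A s1 q2 = {s1}"
      "tree_interval A s2 q1 \<inter> tree_interval A s2 q2 = {s2}"
    using sink_cycle.cycle_verts_eq[OF st1] sink_cycle.tree_intervals_inter[OF st1]
      sink_cycle.cycle_verts_eq[OF st2] sink_cycle.tree_intervals_inter[OF st2]
      eq1(1) eq2(1) \<open>h1 = h\<close> \<open>h2 = h\<close> unfolding q1_def q2_def by auto
  from inter have "s1 = s2"
    by (rule tree_interval_meet_unique)
  then have "set cs1 = set cs2"
    using verts by simp
  then show ?thesis
    using sink_cycle.cycle_no_chords[OF st1, unfolded eq1] sink_cycle.cycle_no_chords[OF st2, unfolded eq2]
    by simp
qed

lemma cycle_arcs_eq_if_common_arc:
  assumes "ucycle A cs1" "ucycle A cs2" "e \<in> cycle_arcs A cs1" "e \<in> cycle_arcs A cs2"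
  shows "cycle_arcs A cs1 = cycle_arcs A cs2"
proof -
  obtain h1 h2 where h: "h1 \<in> set cs1" "is_hybrid A h1" "h2 \<in> set cs2" "is_hybrid A h2"
    using ucycle_has_hybrid[OF assms(1)] ucycle_has_hybrid[OF assms(2)] by blast
  define B where "B = {f \<in> A. same_block A e f}"
  have B: "B \<in> blocks A"
    unfolding B_def using block_of_arc assms(3) cycle_arcs_subset by blast
  have "h1 \<in> block_verts B" "h2 \<in> block_verts B"
    using ucycle_verts_subset_block[OF assms(1,3)] ucycle_verts_subset_block[OF assms(2,4)] h(1,3)
    unfolding B_def by blast+
  then have "h1 = h2"
    using block_hybrid_unique[OF B, of h1 h2] h by blast
  then show ?thesis
    using same_hybrid_same_cycle[OF assms(1,2)] h by blast
qed

lemma block_of_cycle_arc: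
  assumes "ucycle A cs" "e \<in> cycle_arcs A cs"
  shows "{f \<in> A. same_block A e f} = cycle_arcs A cs"
proof
  show "cycle_arcs A cs \<subseteq> {f \<in> A. same_block A e f}"
    by (rule cycle_arcs_subset_block[OF assms(2,1)])
  show "{f \<in> A. same_block A e f} \<subseteq> cycle_arcs A cs"
  proof clarify
    fix f assume "f \<in> A" "same_block A e f"
    then consider "f = e" | cs' where "ucycle A cs'" "e \<in> cycle_arcs A cs'" "f \<in> cycle_arcs A cs'"
      unfolding same_block_def by blast
    then show "f \<in> cycle_arcs A cs"
    proof cases
      case 2
      then show ?thesis
        using cycle_arcs_eq_if_common_arc[OF 2(1) assms(1) 2(2) assms(2)] by blast
    qed (use assms(2) in simp)
  qed
qed

lemma galls_eq_cycle_arcs: "galls A = {cycle_arcs A cs | cs. ucycle A cs}"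
proof
  show "galls A \<subseteq> {cycle_arcs A cs | cs. ucycle A cs}"
  proof
    fix C assume "C \<in> galls A"
    then obtain e where e: "e \<in> A" "C = {f \<in> A. same_block A e f}" "card C > 1"
      unfolding galls_def blocks_def by auto
    have "\<not> C \<subseteq> {e}"
      using e(3) card_mono[of "{e}" C] by auto
    \<comment> \<open>an arc on no cycle forms a block by itself\<close>
    then obtain cs where "ucycle A cs" "e \<in> cycle_arcs A cs"
      using e(2) unfolding same_block_def by blast
    then show "C \<in> {cycle_arcs A cs | cs. ucycle A cs}"
      using block_of_cycle_arc e(2) by blast
  qed
  show "{cycle_arcs A cs | cs. ucycle A cs} \<subseteq> galls A"
  proof clarify
    fix cs assume cs: "ucycle A cs"
    then obtain e where "e \<in> cycle_arcs A cs"
      using cycle_arcs_nonempty by blast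
    then have "cycle_arcs A cs \<in> blocks A"
      using block_of_cycle_arc[OF cs] block_of_arc cycle_arcs_subset by fastforce
    moreover have "card (cycle_arcs A cs) > 1"
      using card_cycle_arcs_ucycle[OF cs] length_ucycle_ge4[OF cs] by simp
    ultimately show "cycle_arcs A cs \<in> galls A"
      unfolding galls_def by blast
  qed
qed

lemma finite_galls: "finite (galls A)"
  using finite_A cycle_arcs_subset unfolding galls_eq_cycle_arcs
  by (blast intro: finite_subset[of _ "Pow A"])

lemma card_arcs_on_cycles: "card (arcs_on_cycles A) = (\<Sum>C\<in>galls A. card C)"
proof -
  have "arcs_on_cycles A = \<Union> (galls A)"
    unfolding galls_eq_cycle_arcs arcs_on_cycles_def by blast
  moreover have "pairwise disjnt (galls A)"
    using cycle_arcs_eq_if_common_arc unfolding galls_eq_cycle_arcs pairwise_def disjnt_def by blast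
  moreover have "\<forall>C\<in>galls A. finite C"
    using finite_A cycle_arcs_subset unfolding galls_eq_cycle_arcs by (blast intro: finite_subset)
  ultimately show ?thesis
    by (simp add: card_Union_disjoint)
qed

lemma card_gall_ge4: "C \<in> galls A \<Longrightarrow> card C \<ge> 4"
  unfolding galls_eq_cycle_arcs using card_cycle_arcs_ucycle length_ucycle_ge4 by auto

lemma card_outgoing_arcs_gall:
  assumes "C \<in> galls A"
  shows "card (outgoing_arcs A C) + 1 = card C"
proof -
  obtain cs where cs: "ucycle A cs" "C = cycle_arcs A cs"
    using assms unfolding galls_eq_cycle_arcs by blast
  obtain h ys L1 s L2 where st: "sink_cycle V A X r h ys L1 s L2"
    and eq: "set (h # ys) = set cs" "cycle_arcs A (h # ys) = cycle_arcs A cs"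
    using sink_cycle_exists[OF cs(1)] .
  show ?thesis
    using sink_cycle.card_outgoing_arcs[OF st] eq(2) cs(2) by simp
qed

text \<open>Close the cycle through \<open>h\<close> at a lowest common ancestor \<open>s\<close> of its two parents.\<close>

lemma hybrid_on_ucycle:
  assumes "h \<in> V" "is_hybrid A h"
  obtains cs where "ucycle A cs" "h \<in> set cs"
proof -
  have "card {u. (u, h) \<in> A} = 2"
    using hybrid_degrees[OF assms] unfolding indeg_def by simp
  then obtain p1 p2 where p: "(p1, h) \<in> A" "(p2, h) \<in> A" "p1 \<noteq> p2"
    by (auto simp: card_2_iff)
  define CA where "CA = {t. (t, p1) \<in> A\<^sup>* \<and> (t, p2) \<in> A\<^sup>*}"
  have "r \<in> CA"
    unfolding CA_def using reachable_from_root arc_in_V p by blast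
  then obtain s where s: "s \<in> CA" "\<And>t. (t, s) \<in> (A\<^sup>+)\<inverse> \<Longrightarrow> t \<notin> CA"
    using wfE_min[OF wf_converse_trancl] by metis
  have "(s, p1) \<in> A\<^sup>*" "(s, p2) \<in> A\<^sup>*"
    using s(1) unfolding CA_def by auto
  then obtain P1 P2 where P1: "P1 \<noteq> []" "hd P1 = s" "last P1 = p1" "distinct P1"
      "successively (\<lambda>a b. (a, b) \<in> A) P1"
    and P2: "P2 \<noteq> []" "hd P2 = s" "last P2 = p2" "distinct P2"
      "successively (\<lambda>a b. (a, b) \<in> A) P2"
    using rtrancl_imp_distinct_walk[of s p1 A] rtrancl_imp_distinct_walk[of s p2 A] by blast
  have "set P2 \<inter> set (tl P1) = {}"
  proof (rule ccontr)
    assume "set P2 \<inter> set (tl P1) \<noteq> {}"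
    then obtain v where v: "v \<in> set P2" "v \<in> set (tl P1)"
      by blast
    obtain Q1 where P1_eq: "P1 = s # Q1"
      using P1(1,2) by (cases P1) auto
    then have "v \<in> set P1" "v \<noteq> s"
      using v(2) P1(4) by auto
    \<comment> \<open>a common ancestor strictly below \<open>s\<close>\<close>
    moreover have "v \<in> CA"
      using walk_rtrancl[OF P1(5) \<open>v \<in> set P1\<close>] walk_rtrancl[OF P2(5) v(1)] P1(3) P2(3)
      unfolding CA_def by auto
    moreover have "(s, v) \<in> A\<^sup>*"
      using walk_rtrancl[OF P1(5) \<open>v \<in> set P1\<close>] P1(2) by simp
    ultimately show False
      using s(2) by (metis converse_iff rtranclD)
  qed
  moreover have "h \<notin> set P1 \<union> set P2"
    using walk_rtrancl[OF P1(5)] walk_rtrancl[OF P2(5)] P1(3) P2(3) p(1,2) no_path_back by blast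
  ultimately have "ucycle A (h # rev P2 @ tl P1)"
    using ucycle_of_two_paths[OF P1(5,4,1) P2(5,4,1)] P1(2,3) P2(2,3) p by simp
  then show thesis
    by (rule that) simp
qed

lemma card_galls: "card (galls A) = card (hybrid_verts V A)"
proof -
  have "\<forall>h\<in>hybrid_verts V A. \<exists>cs. ucycle A cs \<and> h \<in> set cs"
    using hybrid_on_ucycle unfolding hybrid_verts_def by (metis (mono_tags, lifting) mem_Collect_eq)
  then obtain cyc where cyc: "\<And>h. h \<in> hybrid_verts V A \<Longrightarrow> ucycle A (cyc h) \<and> h \<in> set (cyc h)"
    by metis
  have "galls A = (\<lambda>h. cycle_arcs A (cyc h)) ` hybrid_verts V A"
  proof
    show "(\<lambda>h. cycle_arcs A (cyc h)) ` hybrid_verts V A \<subseteq> galls A"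
      unfolding galls_eq_cycle_arcs using cyc by blast
    show "galls A \<subseteq> (\<lambda>h. cycle_arcs A (cyc h)) ` hybrid_verts V A"
    proof
      fix C assume "C \<in> galls A"
      then obtain cs where cs: "ucycle A cs" "C = cycle_arcs A cs"
        unfolding galls_eq_cycle_arcs by blast
      then obtain h where h: "h \<in> set cs" "is_hybrid A h"
        using ucycle_has_hybrid by blast
      then have "h \<in> hybrid_verts V A"
        using ucycle_verts_in_V[OF cs(1)] unfolding hybrid_verts_def by blast
      then have "C = cycle_arcs A (cyc h)"
        using same_hybrid_same_cycle[OF cs(1) _ h(2) h(1)] cyc cs(2) by blast
      then show "C \<in> (\<lambda>h. cycle_arcs A (cyc h)) ` hybrid_verts V A"
        using \<open>h \<in> hybrid_verts V A\<close> by blast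
    qed
  qed
  moreover have "inj_on (\<lambda>h. cycle_arcs A (cyc h)) (hybrid_verts V A)"
  proof (rule inj_onI)
    fix h1 h2 assume h: "h1 \<in> hybrid_verts V A" "h2 \<in> hybrid_verts V A"
      "cycle_arcs A (cyc h1) = cycle_arcs A (cyc h2)"
    have "set (cyc h1) = set (cyc h2)"
      using block_verts_cycle_arcs cyc h by metis
    then show "h1 = h2"
      using ucycle_hybrid_unique[of "cyc h1" h1 h2] cyc h unfolding hybrid_verts_def by auto
  qed
  ultimately show ?thesis
    by (simp add: card_image)
qed

section \<open>Counting\<close>

lemma degree_balance:
  assumes "v \<in> V"
  shows "2 * int (indeg A v) - int (outdeg A v) =
    (if v = r then -2 else 0) + (if v \<in> X then 2 else 0) + (if v \<in> hybrid_verts V A then 3 else 0)"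
proof -
  consider "v = r" | "v \<in> X" | "v \<in> hybrid_verts V A" | "v \<noteq> r" "v \<notin> X" "v \<notin> hybrid_verts V A"
    by blast
  then show ?thesis
  proof cases
    case 4
    then have "is_split A v"
      using inner_vert assms unfolding hybrid_verts_def by blast
    then show ?thesis
      using 4 split_outdeg assms unfolding is_split_def by simp
  qed (use indeg_root outdeg_root leaf_degrees hybrid_degrees root_in_V in \<open>force simp: hybrid_verts_def\<close>)+
qed

text \<open>Handshake: summed over all vertices, \<open>2 indeg - outdeg\<close> gives \<open>|A|\<close>.\<close>

lemma card_arcs: "int (card A) = 2 * int (card X) + 3 * int (card (hybrid_verts V A)) - 2"
proof -
  let ?H = "hybrid_verts V A"
  have "{(u, v) \<in> A. v \<in> V} = A" "{(v, u) \<in> A. v \<in> V} = A"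
    using arcs_subset by auto
  then have card_in: "card A = (\<Sum>v\<in>V. indeg A v)" and card_out: "card A = (\<Sum>v\<in>V. outdeg A v)"
    using card_arcs_into_eq_sum[OF finite_V, of A] card_arcs_from_eq_sum[OF finite_V, of A]
      finite_preds finite_succs
    unfolding indeg_def outdeg_def by simp_all
  have "2 * int (card A) = (\<Sum>v\<in>V. 2 * int (indeg A v))"
    unfolding card_in by (simp add: sum_distrib_left)
  moreover have "int (card A) = (\<Sum>v\<in>V. int (outdeg A v))"
    unfolding card_out by simp
  ultimately have "int (card A) = (\<Sum>v\<in>V. 2 * int (indeg A v) - int (outdeg A v))"
    by (simp add: sum_subtractf)
  also have "\<dots> = (\<Sum>v\<in>V. (if v = r then -2 else 0) + (if v \<in> X then 2 else 0) + (if v \<in> ?H then 3 else 0))"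
    using degree_balance by (rule sum.cong[OF refl])
  also have "\<dots> = -2 + 2 * int (card X) + 3 * int (card ?H)"
  proof -
    have "V \<inter> X = X" "V \<inter> ?H = ?H"
      using leaves_subset unfolding hybrid_verts_def by auto
    then show ?thesis
      using finite_V root_in_V by (simp add: sum.distrib sum.If_cases)
  qed
  finally show ?thesis
    by simp
qed

lemma cut_arc_iff: "is_cut_arc V A a \<longleftrightarrow> a \<in> A \<and> a \<notin> arcs_on_cycles A"
  using cycle_arc_not_cut[OF uconnected_network] acyclic_arc_on_no_cycle_is_cut[OF arcs_subset acyclic_A]
  unfolding arcs_on_cycles_def is_cut_arc_def by blast

text \<open>The arcs into leaves are cut arcs, since leaves lie on no cycle.\<close>

lemma num_nontriv_cut_arcs_eq:
  "int (num_nontriv_cut_arcs V A) = int (card A) - int (card (arcs_on_cycles A)) - int (card X)"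
proof -
  define L where "L = {(u, w) \<in> A. w \<in> X}"
  have "card L = (\<Sum>w\<in>X. indeg A w)"
    using card_arcs_into_eq_sum[of X A] finite_subset[OF leaves_subset finite_V] finite_preds
    unfolding L_def indeg_def by blast
  then have card_L: "card L = card X"
    using leaf_degrees by simp
  have L_sub: "L \<subseteq> A - arcs_on_cycles A"
    using leaf_not_on_ucycle cycle_arcs_subset_Times unfolding L_def arcs_on_cycles_def by blast
  have on_cycles_sub: "arcs_on_cycles A \<subseteq> A"
    unfolding arcs_on_cycles_def using cycle_arcs_subset by blast
  have "{(u, w). is_cut_arc V A (u, w) \<and> w \<notin> leaves V A} = (A - arcs_on_cycles A) - L"
    unfolding L_def cut_arc_iff leaves_eq[symmetric] by auto
  then have "num_nontriv_cut_arcs V A = card (A - arcs_on_cycles A) - card L"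
    unfolding num_nontriv_cut_arcs_def using L_sub finite_A by (simp add: card_Diff_subset finite_subset)
  moreover have "card (A - arcs_on_cycles A) = card A - card (arcs_on_cycles A)"
    using on_cycles_sub finite_A by (simp add: card_Diff_subset finite_subset)
  moreover have "card L \<le> card (A - arcs_on_cycles A)" "card (arcs_on_cycles A) \<le> card A"
    using L_sub on_cycles_sub finite_A by (simp_all add: card_mono)
  ultimately show ?thesis
    using card_L by linarith
qed

lemma gall_defect:
  "int (card X) - int (num_nontriv_cut_arcs V A) - 2 - int (num_galls A)
     = (\<Sum>C\<in>galls A. int (card (outgoing_arcs A C)) - 3)"
proof -
  have "int (card X) - int (num_nontriv_cut_arcs V A) - 2 - int (num_galls A)
      = int (card (arcs_on_cycles A)) - 4 * int (card (galls A))"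
    using num_nontriv_cut_arcs_eq card_arcs card_galls unfolding num_galls_def by simp
  also have "\<dots> = (\<Sum>C\<in>galls A. int (card C) - 4)"
    using card_arcs_on_cycles by (simp add: sum_subtractf)
  also have "\<dots> = (\<Sum>C\<in>galls A. int (card (outgoing_arcs A C)) - 3)"
    using card_outgoing_arcs_gall by (intro sum.cong) force+
  finally show ?thesis .
qed

end

theorem mainTheorem3:
  fixes V :: "'v set" and A :: "('v \<times> 'v) set" and X :: "'v set" and r :: 'v
  assumes "binary_level1 V A X r"
    and "card X \<ge> 2"
  shows "int (num_galls A) \<le> int (card X) - int (num_nontriv_cut_arcs V A) - 2 \<and>
         ((\<forall>v\<in>V. \<not> is_hybrid A v) \<or> (\<forall>C \<in> galls A. card (outgoing_arcs A C) = 3)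
          \<longrightarrow> int (num_galls A) = int (card X) - int (num_nontriv_cut_arcs V A) - 2)"
proof -
  interpret binary_level1_net V A X r
    using assms(1) by unfold_locales
  have "card (outgoing_arcs A C) \<ge> 3" if "C \<in> galls A" for C
    using card_outgoing_arcs_gall[OF that] card_gall_ge4[OF that] by simp
  then have "int (num_galls A) \<le> int (card X) - int (num_nontriv_cut_arcs V A) - 2"
    using gall_defect sum_nonneg[of "galls A" "\<lambda>C. int (card (outgoing_arcs A C)) - 3"] by force
  moreover have "galls A = {}" if "\<forall>v\<in>V. \<not> is_hybrid A v"
  proof -
    have "hybrid_verts V A = {}"
      using that unfolding hybrid_verts_def by blast
    then show ?thesis
      using card_galls finite_galls by simp
  qed
  ultimately show ?thesis
    using gall_defect by auto
qed

end
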